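(* Let $E$ be a Banach lattice and let $T\colon E\to E$ be an order bounded, disjoint preserving operator which is $uaw$-Dunford-Pettis. Then the modulus $|T|$ of $T$ exists and is $uaw$-Dunford-Pettis.
   Context: A net $(x_\alpha)$ in a Banach lattice $E$ is $uaw$-convergent to $x$ if $|x_\alpha-x|\wedge u\to 0$ weakly for every $u\in E_+$. A bounded operator $T\colon E\to E$ is $uaw$-Dunford-Pettis if every norm bounded $uaw$-null sequence $(x_n)$ in $E$ satisfies $\|Tx_n\|\to 0$. An operator $T$ is disjoint preserving if $x\perp y$ implies $Tx\perp Ty$. *)

theory Defs
  imports "HOL-Analysis.Analysis"
begin

class banach_lattice = banach + ordered_real_vector + lattice +
  assumes lattice_norm: "sup x (- x) \<le> sup y (- y) \<Longrightarrow> norm x \<le> norm y"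

definition labs :: "'a::banach_lattice \<Rightarrow> 'a" where
  "labs x = sup x (- x)"

definition disjoint_el :: "'a::banach_lattice \<Rightarrow> 'a \<Rightarrow> bool" where
  "disjoint_el x y \<longleftrightarrow> inf (labs x) (labs y) = 0"

definition weakly_tendsto :: "('i \<Rightarrow> 'a::banach_lattice) \<Rightarrow> 'a \<Rightarrow> 'i filter \<Rightarrow> bool" where
  "weakly_tendsto xs x F \<longleftrightarrow>
     (\<forall>f::'a \<Rightarrow> real. bounded_linear f \<longrightarrow> ((\<lambda>i. f (xs i)) \<longlongrightarrow> f x) F)"

definition uaw_tendsto :: "('i \<Rightarrow> 'a::banach_lattice) \<Rightarrow> 'a \<Rightarrow> 'i filter \<Rightarrow> bool" where
  "uaw_tendsto xs x F \<longleftrightarrow>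
     (\<forall>u. 0 \<le> u \<longrightarrow> weakly_tendsto (\<lambda>i. inf (labs (xs i - x)) u) 0 F)"

definition uaw_DP :: "('a::banach_lattice \<Rightarrow> 'a) \<Rightarrow> bool" where
  "uaw_DP T \<longleftrightarrow> bounded_linear T \<and>
     (\<forall>xs::nat \<Rightarrow> 'a. bounded (range xs) \<and> uaw_tendsto xs 0 sequentially
        \<longrightarrow> ((\<lambda>n. norm (T (xs n))) \<longlongrightarrow> 0) sequentially)"

definition order_bounded_op :: "('a::banach_lattice \<Rightarrow> 'a) \<Rightarrow> bool" where
  "order_bounded_op T \<longleftrightarrow> (\<forall>x y. x \<le> y \<longrightarrow> (\<exists>a b. T ` {x..y} \<subseteq> {a..b}))"

definition disjoint_preserving :: "('a::banach_lattice \<Rightarrow> 'a) \<Rightarrow> bool" where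
  "disjoint_preserving T \<longleftrightarrow> (\<forall>x y. disjoint_el x y \<longrightarrow> disjoint_el (T x) (T y))"

definition Lb :: "('a::banach_lattice \<Rightarrow> 'a) set" where
  "Lb = {T. linear T \<and> order_bounded_op T}"

definition op_le :: "('a::banach_lattice \<Rightarrow> 'a) \<Rightarrow> ('a \<Rightarrow> 'a) \<Rightarrow> bool" where
  "op_le S R \<longleftrightarrow> (\<forall>x. 0 \<le> x \<longrightarrow> S x \<le> R x)"

definition is_modulus :: "('a::banach_lattice \<Rightarrow> 'a) \<Rightarrow> ('a \<Rightarrow> 'a) \<Rightarrow> bool" where
  "is_modulus T S \<longleftrightarrow> S \<in> Lb \<and> op_le T S \<and> op_le (\<lambda>x. - T x) S \<and>
     (\<forall>R\<in>Lb. op_le T R \<and> op_le (\<lambda>x. - T x) R \<longrightarrow> op_le S R)"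

end

(*
  For a disjointness preserving T the map x \<mapsto> |T x| is additive on the positive cone:
  |T x| + |T y| = |T (x + y)| \<squnion> |T |x - y||, and |T|x - y|| \<le> |T (x + y)| because |T \<cdot>| is
  monotone on the positive cone. Monotonicity is a halving argument: y \<mapsto> |2y - x| maps [0, x]
  into itself and |2 T y| \<le> |T x| + |T |2y - x||, so the excess of |T y| over |T x| is at most
  2\<^sup>-\<^sup>k times an order bound of T on [0, x]. The linear extension x \<mapsto> |T x\<^sup>+| - |T x\<^sup>-| is
  therefore the modulus |T|, and | |T| x | = |T x| since T x\<^sup>+ and T x\<^sup>- are disjoint. Hence |T|
  and T have the same norms pointwise, and |T| is uaw-Dunford-Pettis together with T.
*)

theory Submission
  imports Defs "HOL-Library.Lattice_Algebras"
begin

subclass (in banach_lattice) lattice_ab_group_add ..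

interpretation labs: lattice_ab_group_add_abs labs "(+)" "0::'a::banach_lattice" "(-)" uminus
    "(\<le>)" "(<)" inf sup
  by unfold_locales (simp add: labs_def)

lemma labs_eq_pprt_minus_nprt: "labs a = pprt a - nprt (a::'a::banach_lattice)"
proof -
  have a: "a + sup (- a) 0 = sup 0 a"
    by (simp add: add_sup_distrib_left)
  have "pprt a - nprt a = sup a 0 + sup (- a) 0"
    using pprt_neg[of a] by (simp add: pprt_def)
  also have "\<dots> = sup (sup 0 a) (sup (- a) 0)"
    by (simp only: add_sup_distrib_right a add_0_left)
  also have "\<dots> = sup 0 (labs a)"
    by (simp add: labs_def sup_aci)
  finally show ?thesis
    by (simp add: sup_absorb2)
qed

lemma labs_diff_eq_sup_minus_inf: "labs (a - b) = sup a b - inf a (b::'a::banach_lattice)"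
proof -
  have "sup a b = b + pprt (a - b)"
    by (simp add: pprt_def add_sup_distrib_left)
  moreover have "inf a b = b + nprt (a - b)"
    by (simp add: nprt_def add_inf_distrib_left)
  ultimately show ?thesis
    by (simp add: labs_eq_pprt_minus_nprt)
qed

lemma inf_pprt_minus_nprt: "inf (pprt a) (- nprt a) = (0::'a::banach_lattice)"
proof -
  have "pprt a - inf (pprt a) (- nprt a) = sup 0 (pprt a + nprt a)"
    by (simp add: diff_inf_eq_sup add_sup_distrib_left)
  also have "\<dots> = pprt a"
    by (simp only: prts[symmetric]) (simp add: pprt_def sup_commute)
  finally show ?thesis
    by (metis add_cancel_left_right diff_add_cancel)
qed

lemma labs_add_disjoint:
  fixes u v :: "'a::banach_lattice"
  assumes "inf (labs u) (labs v) = 0"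
  shows "labs (u + v) = labs u + labs v"
proof (rule antisym)
  show "labs (u + v) \<le> labs u + labs v"
    by (rule labs.abs_triangle_ineq)
  have "labs u + labs v = sup (labs u) (labs v)"
    using add_eq_inf_sup[of "labs u" "labs v"] assms by simp
  also have "\<dots> = labs (labs u - labs (- v))"
    using assms by (simp add: labs_diff_eq_sup_minus_inf)
  also have "\<dots> \<le> labs (u + v)"
    using labs.abs_triangle_ineq3[of u "- v"] by simp
  finally show "labs u + labs v \<le> labs (u + v)" .
qed

lemma labs_diff_disjoint:
  "inf (labs u) (labs v) = 0 \<Longrightarrow> labs (u - v) = labs u + labs (v::'a::banach_lattice)"
  using labs_add_disjoint[of u "- v"] by simp

lemma sup_labs_add_labs_diff:
  "sup (labs (a + b)) (labs (a - b)) = labs a + labs (b::'a::banach_lattice)"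
proof -
  have "a + sup b (- b) = sup (a + b) (a - b)" "- a + sup b (- b) = sup (b - a) (- a - b)"
    by (simp_all add: add_sup_distrib_left)
  then have "labs a + labs b = sup (sup (a + b) (a - b)) (sup (b - a) (- a - b))"
    by (simp only: labs_def add_sup_distrib_right)
  moreover have "sup (labs (a + b)) (labs (a - b)) = sup (sup (a + b) (- a - b)) (sup (a - b) (b - a))"
    by (simp add: labs_def)
  ultimately show ?thesis
    by (simp only: sup_aci)
qed

lemma scaleR_sup_nonneg:
  fixes x y :: "'a::banach_lattice"
  assumes "0 \<le> c"
  shows "c *\<^sub>R sup x y = sup (c *\<^sub>R x) (c *\<^sub>R y)"
proof (cases "c = 0")
  case False
  with assms have c: "0 < c" by simp
  have "x \<le> (1/c) *\<^sub>R sup (c *\<^sub>R x) (c *\<^sub>R y)" "y \<le> (1/c) *\<^sub>R sup (c *\<^sub>R x) (c *\<^sub>R y)"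
    using c scaleR_left_mono[of "c *\<^sub>R x" "sup (c *\<^sub>R x) (c *\<^sub>R y)" "1/c"]
      scaleR_left_mono[of "c *\<^sub>R y" "sup (c *\<^sub>R x) (c *\<^sub>R y)" "1/c"] by simp_all
  then have "c *\<^sub>R sup x y \<le> c *\<^sub>R ((1/c) *\<^sub>R sup (c *\<^sub>R x) (c *\<^sub>R y))"
    using assms by (intro scaleR_left_mono) simp_all
  with c have "c *\<^sub>R sup x y \<le> sup (c *\<^sub>R x) (c *\<^sub>R y)"
    by simp
  moreover have "sup (c *\<^sub>R x) (c *\<^sub>R y) \<le> c *\<^sub>R sup x y"
    using assms by (auto intro: scaleR_left_mono)
  ultimately show ?thesis
    by (rule antisym)
qed simp

lemma labs_scaleR_nonneg: "0 \<le> c \<Longrightarrow> labs (c *\<^sub>R a) = c *\<^sub>R labs (a::'a::banach_lattice)"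
  by (simp add: labs_def scaleR_sup_nonneg)

lemma norm_le_if_labs_le: "labs a \<le> labs b \<Longrightarrow> norm a \<le> norm (b::'a::banach_lattice)"
  using lattice_norm by (simp add: labs_def)

lemma norm_labs: "norm (labs a) = norm (a::'a::banach_lattice)"
  by (intro antisym norm_le_if_labs_le) simp_all

lemma norm_mono_nonneg:
  fixes a b :: "'a::banach_lattice"
  assumes "0 \<le> a" "a \<le> b"
  shows "norm a \<le> norm b"
proof (rule norm_le_if_labs_le)
  have "labs a = a" "labs b = b"
    using assms order.trans[OF assms] by (simp_all only: labs.abs_of_nonneg)
  then show "labs a \<le> labs b"
    using assms(2) by (simp only:)
qed

lemma le_if_le_add_vanishing:
  fixes a b w :: "'a::banach_lattice"
  assumes le: "\<And>n. a \<le> b + c n *\<^sub>R w" and c: "c \<longlonglongrightarrow> 0"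
  shows "a \<le> b"
proof -
  define d where "d = sup (a - b) 0"
  have bound: "norm d \<le> \<bar>c n\<bar> * norm w" for n
  proof -
    have "a - b \<le> c n *\<^sub>R w"
      using le[of n] by (simp add: algebra_simps)
    also have "\<dots> \<le> labs (c n *\<^sub>R w)"
      by (rule labs.abs_ge_self)
    finally have "d \<le> labs (c n *\<^sub>R w)"
      by (simp add: d_def)
    then have "norm d \<le> norm (labs (c n *\<^sub>R w))"
      by (intro norm_mono_nonneg) (simp_all add: d_def)
    then show ?thesis
      by (simp add: norm_labs)
  qed
  have "(\<lambda>n. \<bar>c n\<bar> * norm w) \<longlonglongrightarrow> 0"
    by (intro tendsto_mult_left_zero tendsto_rabs_zero c)
  then have "norm d \<le> 0"
    by (rule LIMSEQ_le_const) (use bound in auto)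
  then have "sup (a - b) 0 = 0"
    by (simp add: d_def)
  then show ?thesis
    by (metis sup.cobounded1 diff_le_0_iff_le)
qed

lemma labs_le_sup_labs_bounds:
  fixes a b v :: "'a::banach_lattice"
  assumes "a \<le> v" "v \<le> b"
  shows "labs v \<le> sup (labs a) (labs b)"
proof (rule labs.abs_leI)
  show "v \<le> sup (labs a) (labs b)"
    using assms(2) labs.abs_ge_self[of b] by (blast intro: le_supI2 order_trans)
  show "- v \<le> sup (labs a) (labs b)"
    using assms(1) labs.abs_ge_minus_self[of a]
    by (blast intro: le_supI1 order_trans neg_le_iff_le[THEN iffD2])
qed

lemma order_bounded_op_labs_bound:
  assumes "order_bounded_op T" "x \<le> y"
  obtains w where "\<And>v. x \<le> v \<Longrightarrow> v \<le> y \<Longrightarrow> labs (T v) \<le> w"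
proof -
  obtain a b where ab: "T ` {x..y} \<subseteq> {a..b}"
    using assms unfolding order_bounded_op_def by blast
  have "labs (T v) \<le> sup (labs a) (labs b)" if "x \<le> v" "v \<le> y" for v
    using that ab by (intro labs_le_sup_labs_bounds) (auto simp: image_subset_iff)
  then show thesis
    by (rule that)
qed

definition modulus_op :: "('a::banach_lattice \<Rightarrow> 'a) \<Rightarrow> 'a \<Rightarrow> 'a" where
  "modulus_op T x = labs (T (pprt x)) - labs (T (- nprt x))"

context
  fixes T :: "'a::banach_lattice \<Rightarrow> 'a"
  assumes linear: "linear T" and disjoint: "disjoint_preserving T"
begin

lemma disjoint_images_of_parts: "inf (labs (T (pprt x))) (labs (T (- nprt x))) = 0"
proof -
  have "disjoint_el (pprt x) (- nprt x)"
    by (simp add: disjoint_el_def inf_pprt_minus_nprt)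
  then show ?thesis
    using disjoint by (simp add: disjoint_preserving_def disjoint_el_def)
qed

lemma labs_image_eq_add_parts: "labs (T x) = labs (T (pprt x)) + labs (T (- nprt x))"
proof -
  have "T x = T (pprt x) - T (- nprt x)"
    by (subst prts) (simp add: linear_add[OF linear] linear_neg[OF linear])
  then show ?thesis
    by (simp add: labs_diff_disjoint[OF disjoint_images_of_parts])
qed

lemma labs_image_labs: "labs (T (labs x)) = labs (T x)"
proof -
  have "T (labs x) = T (pprt x) + T (- nprt x)"
    using linear_add[OF linear, of "pprt x" "- nprt x"] by (simp add: labs_eq_pprt_minus_nprt)
  then show ?thesis
    by (simp only: labs_add_disjoint[OF disjoint_images_of_parts] labs_image_eq_add_parts[symmetric])
qed

lemma labs_image_double_le: "labs (T y) + labs (T y) \<le> labs (T x) + labs (T (labs (y + y - x)))"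
proof -
  have "labs (T y) + labs (T y) = labs (T y + T y)"
    using labs_scaleR_nonneg[of 2 "T y"] by (simp add: scaleR_2)
  also have "T y + T y = T x + T (y + y - x)"
    using linear_add[OF linear, of x "y + y - x"] linear_add[OF linear, of y y] by simp
  also have "labs \<dots> \<le> labs (T x) + labs (T (y + y - x))"
    by (rule labs.abs_triangle_ineq)
  finally show ?thesis
    by (simp add: labs_image_labs)
qed

lemma labs_image_le_halving:
  assumes w: "\<And>v. 0 \<le> v \<Longrightarrow> v \<le> x \<Longrightarrow> labs (T v) \<le> w"
  shows "0 \<le> y \<Longrightarrow> y \<le> x \<Longrightarrow> labs (T y) \<le> labs (T x) + ((1/2) ^ k) *\<^sub>R w"
proof (induction k arbitrary: y)
  case 0
  then have "labs (T y) \<le> w"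
    by (intro w)
  then show ?case
    by (simp add: add_increasing)
next
  case (Suc k)
  have "y + y \<le> x + x" "0 \<le> y + y"
    using Suc.prems by (simp_all add: add_mono)
  then have "labs (y + y - x) \<le> x"
    by (intro labs.abs_leI) (simp_all add: algebra_simps)
  then have "labs (T (labs (y + y - x))) \<le> labs (T x) + ((1/2) ^ k) *\<^sub>R w"
    by (intro Suc.IH labs.abs_ge_zero)
  then have "labs (T y) + labs (T y) \<le> labs (T x) + (labs (T x) + ((1/2) ^ k) *\<^sub>R w)"
    by (rule order_trans[OF labs_image_double_le add_left_mono])
  also have "\<dots> = 2 *\<^sub>R (labs (T x) + ((1/2) ^ Suc k) *\<^sub>R w)"
    using power_Suc[of "1/2::real" k]
    by (simp only: scaleR_add_right scaleR_scaleR scaleR_2 add.assoc) simp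
  finally have "2 *\<^sub>R labs (T y) \<le> 2 *\<^sub>R (labs (T x) + ((1/2) ^ Suc k) *\<^sub>R w)"
    by (simp only: scaleR_2)
  then show ?case
    by (rule scaleR_le_cancel_left_pos[THEN iffD1, rotated]) simp
qed

context
  assumes order_bounded: "order_bounded_op T"
begin

lemma labs_image_mono:
  assumes "0 \<le> y" "y \<le> x"
  shows "labs (T y) \<le> labs (T x)"
proof -
  obtain w where w: "\<And>v. 0 \<le> v \<Longrightarrow> v \<le> x \<Longrightarrow> labs (T v) \<le> w"
    using order_bounded_op_labs_bound[OF order_bounded order.trans[OF assms]] by blast
  have "labs (T y) \<le> labs (T x) + ((1/2) ^ k) *\<^sub>R w" for k
    using labs_image_le_halving[OF w assms] .
  then show ?thesis
    by (rule le_if_le_add_vanishing[where c = "\<lambda>k. (1/2) ^ k"]) (simp_all add: LIMSEQ_realpow_zero)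
qed

lemma labs_image_add_nonneg:
  assumes "0 \<le> x" "0 \<le> y"
  shows "labs (T (x + y)) = labs (T x) + labs (T y)"
proof -
  have "labs (T x) + labs (T y) = sup (labs (T (x + y))) (labs (T (labs (x - y))))"
    by (simp add: sup_labs_add_labs_diff[symmetric] linear_add[OF linear] linear_diff[OF linear]
        labs_image_labs)
  also have "labs (T (labs (x - y))) \<le> labs (T (x + y))"
    using assms by (intro labs_image_mono labs.abs_leI) (simp_all add: add_increasing add_increasing2)
  then have "sup (labs (T (x + y))) (labs (T (labs (x - y)))) = labs (T (x + y))"
    by (rule sup_absorb1)
  finally show ?thesis
    by simp
qed

lemma modulus_op_diff_nonneg:
  assumes "0 \<le> a" "0 \<le> b"
  shows "modulus_op T (a - b) = labs (T a) - labs (T b)"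
proof -
  have "pprt (a - b) + b = - nprt (a - b) + a"
    using prts[of "a - b"] by (simp add: algebra_simps)
  then have "labs (T (pprt (a - b))) + labs (T b) = labs (T (- nprt (a - b))) + labs (T a)"
    using assms by (simp add: labs_image_add_nonneg[symmetric])
  then show ?thesis
    by (simp add: modulus_op_def algebra_simps)
qed

lemma modulus_op_nonneg: "0 \<le> x \<Longrightarrow> modulus_op T x = labs (T x)"
  using modulus_op_diff_nonneg[of x 0] by (simp add: linear_0[OF linear])

lemma linear_modulus_op: "linear (modulus_op T)"
proof (rule linearI)
  fix x y :: 'a
  have "x + y = (pprt x + nprt x) + (pprt y + nprt y)"
    by (simp only: prts[symmetric])
  then have "x + y = (pprt x + pprt y) - (- nprt x + - nprt y)"
    by (simp add: algebra_simps)
  then have "modulus_op T (x + y) = labs (T (pprt x + pprt y)) - labs (T (- nprt x + - nprt y))"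
    by (simp only:) (intro modulus_op_diff_nonneg add_nonneg_nonneg; simp)
  also have "\<dots> = modulus_op T x + modulus_op T y"
    using labs_image_add_nonneg[of "pprt x" "pprt y"] labs_image_add_nonneg[of "- nprt x" "- nprt y"]
    by (simp add: modulus_op_def)
  finally show "modulus_op T (x + y) = modulus_op T x + modulus_op T y" .
next
  fix c :: real and x :: 'a
  have nonneg_scale: "modulus_op T (c *\<^sub>R z) = c *\<^sub>R modulus_op T z" if "0 \<le> c" for c z
  proof -
    have "c *\<^sub>R z = c *\<^sub>R (pprt z + nprt z)"
      by (simp only: prts[symmetric])
    then have "c *\<^sub>R z = c *\<^sub>R pprt z - c *\<^sub>R (- nprt z)"
      by (simp add: algebra_simps)
    then have "modulus_op T (c *\<^sub>R z) = labs (T (c *\<^sub>R pprt z)) - labs (T (c *\<^sub>R (- nprt z)))"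
      by (simp only:) (intro modulus_op_diff_nonneg scaleR_nonneg_nonneg that; simp)
    also have "\<dots> = c *\<^sub>R modulus_op T z"
      by (simp only: linear_scale[OF linear] labs_scaleR_nonneg[OF that] modulus_op_def
          scaleR_diff_right)
    finally show ?thesis .
  qed
  have minus: "modulus_op T (- z) = - modulus_op T z" for z
    by (simp add: modulus_op_def pprt_neg nprt_neg)
  show "modulus_op T (c *\<^sub>R x) = c *\<^sub>R modulus_op T x"
  proof (cases "0 \<le> c")
    case False
    then have "modulus_op T (c *\<^sub>R x) = - modulus_op T ((- c) *\<^sub>R x)"
      using minus[of "(- c) *\<^sub>R x"] by simp
    also have "\<dots> = c *\<^sub>R modulus_op T x"
      using False nonneg_scale[of "- c" x] by simp
    finally show ?thesis .
  qed (rule nonneg_scale)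
qed

end

lemma labs_modulus_op: "labs (modulus_op T x) = labs (T x)"
  by (simp add: modulus_op_def labs_diff_disjoint disjoint_images_of_parts
      labs_image_eq_add_parts[symmetric])

end

lemma order_bounded_op_if_positive:
  assumes "linear S" and pos: "\<And>x. 0 \<le> x \<Longrightarrow> 0 \<le> S x"
  shows "order_bounded_op S"
  unfolding order_bounded_op_def
proof (intro allI impI exI)
  fix x y :: 'a
  assume "x \<le> y"
  show "S ` {x..y} \<subseteq> {S x..S y}"
  proof
    fix z assume "z \<in> S ` {x..y}"
    then obtain v where "x \<le> v" "v \<le> y" "z = S v"
      by auto
    then show "z \<in> {S x..S y}"
      using pos[of "v - x"] pos[of "y - v"] by (simp add: linear_diff[OF \<open>linear S\<close>])
  qed
qed

lemma is_modulusI: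
  assumes "S \<in> Lb" and "\<And>x. 0 \<le> x \<Longrightarrow> S x = labs (T x)"
  shows "is_modulus T S"
  using assms
  by (auto simp: is_modulus_def op_le_def labs.abs_le_iff labs.abs_ge_self labs.abs_ge_minus_self)

lemma uaw_DP_if_norm_le:
  assumes T: "uaw_DP T" and "linear S" and le: "\<And>x. norm (S x) \<le> norm (T x)"
  shows "uaw_DP S"
proof -
  obtain K where K: "\<And>x. norm (T x) \<le> norm x * K"
    using T bounded_linear.bounded unfolding uaw_DP_def by blast
  have "norm (S x) \<le> norm x * K" for x
    using le[of x] K[of x] by linarith
  then have "bounded_linear S"
    using \<open>linear S\<close>
    by (intro bounded_linear_intro[where K = K]) (simp_all add: linear_add linear_scale)
  show ?thesis
    unfolding uaw_DP_def
  proof (intro conjI allI impI)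
    fix xs :: "nat \<Rightarrow> 'a"
    assume "bounded (range xs) \<and> uaw_tendsto xs 0 sequentially"
    then have lim: "(\<lambda>n. norm (T (xs n))) \<longlonglongrightarrow> 0"
      using T unfolding uaw_DP_def by blast
    show "(\<lambda>n. norm (S (xs n))) \<longlonglongrightarrow> 0"
      by (rule Lim_null_comparison[OF _ lim]) (simp add: le)
  qed fact
qed

theorem theorem2p37:
  fixes T :: "'a::banach_lattice \<Rightarrow> 'a"
  assumes "bounded_linear T"
    and "order_bounded_op T"
    and "disjoint_preserving T"
    and "uaw_DP T"
  shows "\<exists>S. is_modulus T S \<and> uaw_DP S"
proof (intro exI conjI)
  have lin: "linear T"
    using assms(1) by (rule bounded_linear.linear)
  have S_lin: "linear (modulus_op T)"
    using lin assms(3,2) by (rule linear_modulus_op)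
  have S_nonneg: "modulus_op T x = labs (T x)" if "0 \<le> x" for x
    using lin assms(3,2) that by (rule modulus_op_nonneg)
  have "modulus_op T \<in> Lb"
    using S_lin by (auto simp: Lb_def S_nonneg intro: order_bounded_op_if_positive)
  then show "is_modulus T (modulus_op T)"
    using S_nonneg by (rule is_modulusI)
  show "uaw_DP (modulus_op T)"
  proof (rule uaw_DP_if_norm_le[OF assms(4) S_lin])
    show "norm (modulus_op T x) \<le> norm (T x)" for x
      by (rule norm_le_if_labs_le) (simp add: labs_modulus_op[OF lin assms(3)])
  qed
qed

end
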